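(* Let $G=K_n$ be the complete graph of order $n\geq 3$, let $g:A\to B$ be a function and let $s=|g(A)|$ with $1<s<n$. Then $2(n-s)-1\leq fix(F_G)\leq 2n-s-3$.
   Context: A set $S\subseteq V(H)$ is a fixing set of a graph $H$ if the only automorphism of $H$ fixing every vertex of $S$ is the identity; $fix(H)$ is the minimum cardinality of a fixing set of $H$. Functigraph: let $G_1,G_2$ be disjoint copies of a connected graph $G$, with $A=V(G_1)$, $B=V(G_2)$, and let $g:A\to B$ be a function. The functigraph $F_G$ has vertex set $A\cup B$ and edge set $E(G_1)\cup E(G_2)\cup\{ug(u):u\in A\}$. *)

theory Defs
  imports Main
begin

text \<open>A (simple) graph is given by a vertex set V and a symmetric irreflexive
  adjacency relation E (only its restriction to V matters).\<close>

definition graph_aut :: "'v set \<Rightarrow> ('v \<Rightarrow> 'v \<Rightarrow> bool) \<Rightarrow> ('v \<Rightarrow> 'v) \<Rightarrow> bool" where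
  "graph_aut V E \<sigma> \<longleftrightarrow> bij_betw \<sigma> V V \<and> (\<forall>x\<in>V. \<forall>y\<in>V. E x y \<longleftrightarrow> E (\<sigma> x) (\<sigma> y))"

definition fixing_set :: "'v set \<Rightarrow> ('v \<Rightarrow> 'v \<Rightarrow> bool) \<Rightarrow> 'v set \<Rightarrow> bool" where
  "fixing_set V E S \<longleftrightarrow> S \<subseteq> V \<and>
     (\<forall>\<sigma>. graph_aut V E \<sigma> \<and> (\<forall>x\<in>S. \<sigma> x = x) \<longrightarrow> (\<forall>x\<in>V. \<sigma> x = x))"

definition fix_num :: "'v set \<Rightarrow> ('v \<Rightarrow> 'v \<Rightarrow> bool) \<Rightarrow> nat" where
  "fix_num V E = Min (card ` {S. fixing_set V E S})"

text \<open>Functigraph: two disjoint copies Inl ` V (= A) and Inr ` V (= B) of G;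
  g : A \<rightarrow> B is represented by g : V \<Rightarrow> V, i.e. Inl u is joined to Inr (g u).\<close>
definition functigraph_V :: "'a set \<Rightarrow> ('a + 'a) set" where
  "functigraph_V V = Inl ` V \<union> Inr ` V"

fun functigraph_E :: "('a \<Rightarrow> 'a \<Rightarrow> bool) \<Rightarrow> ('a \<Rightarrow> 'a) \<Rightarrow> 'a + 'a \<Rightarrow> 'a + 'a \<Rightarrow> bool" where
  "functigraph_E E g (Inl u) (Inl v) = E u v"
| "functigraph_E E g (Inr u) (Inr v) = E u v"
| "functigraph_E E g (Inl u) (Inr w) = (w = g u)"
| "functigraph_E E g (Inr w) (Inl u) = (w = g u)"

end

theory Submission
  imports Defs "HOL-Combinatorics.Transposition"
begin

text \<open>
  Lower bound: two vertices of A with the same image under g are twins, and so are two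
  vertices of B outside g(A); a fixing set must contain one vertex of every pair of twins, so
  it misses at most |g(A)| vertices of A and at most one vertex of B - g(A).

  Upper bound: pick one preimage of every vertex of g(A), a vertex w1 of g(A) with a second
  preimage u1, another vertex w2 of g(A), and w0 in B - g(A).  All remaining vertices form a
  fixing set of size 2n - s - 3.  Indeed, an automorphism fixing it fixes w1, whose degree
  exceeds n = deg(a) for a in A and which is the only candidate adjacent to u1; then the chosen
  preimages, which are separated by their neighbours in B; then w2, adjacent to its preimage
  unlike w0; and finally w0, the only vertex left.
\<close>

definition degree :: "'v set \<Rightarrow> ('v \<Rightarrow> 'v \<Rightarrow> bool) \<Rightarrow> 'v \<Rightarrow> nat" where
  "degree V E x = card {y\<in>V. E x y}"

definition distinguishes :: "'v set \<Rightarrow> ('v \<Rightarrow> 'v \<Rightarrow> bool) \<Rightarrow> 'v set \<Rightarrow> 'v \<Rightarrow> 'v \<Rightarrow> bool" where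
  "distinguishes V E S x y \<longleftrightarrow> (\<exists>z\<in>S. E x z \<noteq> E y z) \<or> degree V E x \<noteq> degree V E y"

lemma graph_aut_degree:
  assumes aut: "graph_aut V E \<sigma>" and x: "x \<in> V"
  shows "degree V E (\<sigma> x) = degree V E x"
proof -
  have bij: "bij_betw \<sigma> V V" and hom: "\<And>a b. a \<in> V \<Longrightarrow> b \<in> V \<Longrightarrow> E a b \<longleftrightarrow> E (\<sigma> a) (\<sigma> b)"
    using aut unfolding graph_aut_def by auto
  have "{y\<in>V. E (\<sigma> x) y} = \<sigma> ` {y\<in>V. E x y}"
  proof (intro equalityI subsetI)
    fix y assume y: "y \<in> {y\<in>V. E (\<sigma> x) y}"
    then obtain y' where "y' \<in> V" "y = \<sigma> y'"
      using bij_betw_imp_surj_on[OF bij] by auto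
    then show "y \<in> \<sigma> ` {y\<in>V. E x y}" using y hom x by auto
  qed (use bij_betw_apply[OF bij] hom x in auto)
  moreover have "inj_on \<sigma> {y\<in>V. E x y}"
    using bij_betw_imp_inj_on[OF bij] by (rule inj_on_subset) auto
  ultimately show ?thesis
    unfolding degree_def by (simp add: card_image)
qed

lemma fixing_set_self: "fixing_set V E V"
  unfolding fixing_set_def by blast

lemma fixing_set_reduce:
  assumes "S \<subseteq> V" and fixing: "fixing_set V E (S \<union> X)"
    and separated: "\<And>x y. x \<in> X \<Longrightarrow> y \<in> V - S \<Longrightarrow> y \<noteq> x \<Longrightarrow> distinguishes V E S x y"
  shows "fixing_set V E S"
  unfolding fixing_set_def
proof (intro conjI allI impI)
  fix \<sigma> assume \<sigma>: "graph_aut V E \<sigma> \<and> (\<forall>x\<in>S. \<sigma> x = x)"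
  then have bij: "bij_betw \<sigma> V V" and hom: "\<And>a b. a \<in> V \<Longrightarrow> b \<in> V \<Longrightarrow> E a b \<longleftrightarrow> E (\<sigma> a) (\<sigma> b)"
    and fixS: "\<And>z. z \<in> S \<Longrightarrow> \<sigma> z = z"
    unfolding graph_aut_def by auto
  have "\<sigma> x = x" if x: "x \<in> X" for x
  proof (rule ccontr)
    assume moved: "\<sigma> x \<noteq> x"
    have xV: "x \<in> V" using fixing x unfolding fixing_set_def by auto
    have "\<sigma> x \<in> V - S"
      using moved bij_betw_apply[OF bij xV] fixS bij_betw_imp_inj_on[OF bij] xV
      by (metis DiffI inj_onD)
    then have "distinguishes V E S x (\<sigma> x)" using separated x moved by auto
    moreover have "E x z \<longleftrightarrow> E (\<sigma> x) z" if "z \<in> S" for z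
      using hom[OF xV] fixS that \<open>S \<subseteq> V\<close> by (metis subsetD)
    ultimately show False
      using graph_aut_degree[OF conjunct1[OF \<sigma>] xV] unfolding distinguishes_def by auto
  qed
  then show "\<forall>x\<in>V. \<sigma> x = x"
    using fixing \<sigma> unfolding fixing_set_def by blast
qed fact

lemma graph_aut_transpose:
  assumes "x \<in> V" and "y \<in> V"
    and out: "\<And>z. z \<in> V \<Longrightarrow> z \<noteq> x \<Longrightarrow> z \<noteq> y \<Longrightarrow> E x z \<longleftrightarrow> E y z"
    and "in": "\<And>z. z \<in> V \<Longrightarrow> z \<noteq> x \<Longrightarrow> z \<noteq> y \<Longrightarrow> E z x \<longleftrightarrow> E z y"
    and "E x y \<longleftrightarrow> E y x" and "E x x \<longleftrightarrow> E y y"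
  shows "graph_aut V E (transpose x y)"
proof (cases "x = y")
  case False
  have "E a b \<longleftrightarrow> E (transpose x y a) (transpose x y b)" if "a \<in> V" "b \<in> V" for a b
    using that assms(5,6) False
    by (cases "a = x"; cases "a = y"; cases "b = x"; cases "b = y") (simp_all add: out "in")
  then show ?thesis
    unfolding graph_aut_def using assms(1,2) by simp
qed (simp add: graph_aut_def)

lemma fixing_set_twin:
  assumes "fixing_set V E S" and "x \<in> V" "y \<in> V" "x \<noteq> y"
    and "\<And>z. z \<in> V \<Longrightarrow> z \<noteq> x \<Longrightarrow> z \<noteq> y \<Longrightarrow> E x z \<longleftrightarrow> E y z"
    and "\<And>z. z \<in> V \<Longrightarrow> z \<noteq> x \<Longrightarrow> z \<noteq> y \<Longrightarrow> E z x \<longleftrightarrow> E z y"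
    and "E x y \<longleftrightarrow> E y x" and "E x x \<longleftrightarrow> E y y"
  shows "x \<in> S \<or> y \<in> S"
proof (rule ccontr)
  assume "\<not> (x \<in> S \<or> y \<in> S)"
  then have "\<forall>z\<in>S. transpose x y z = z"
    by (metis transpose_apply_other)
  then have "transpose x y x = x"
    using assms(1,2) graph_aut_transpose[OF assms(2,3,5-)] unfolding fixing_set_def by blast
  then show False
    using assms(4) by simp
qed

lemma fixing_set_Diff_singleton:
  assumes "x \<in> V"
  shows "fixing_set V E (V - {x})"
proof (rule fixing_set_reduce)
  show "fixing_set V E ((V - {x}) \<union> {x})"
    using assms by (simp add: insert_absorb fixing_set_self)
qed auto

lemma finite_fixing_sets:
  assumes "finite V"
  shows "finite {S. fixing_set V E S}"
  using assms unfolding fixing_set_def by (simp add: finite_subset[of _ "Pow V"] subset_eq)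

lemma fix_num_le:
  assumes "finite V" and "fixing_set V E S"
  shows "fix_num V E \<le> card S"
  unfolding fix_num_def using finite_fixing_sets[OF assms(1)] assms(2) by simp

lemma fix_num_ge:
  assumes "finite V" and "\<And>S. fixing_set V E S \<Longrightarrow> k \<le> card S"
  shows "k \<le> fix_num V E"
proof -
  have "{S. fixing_set V E S} \<noteq> {}"
    using fixing_set_self by blast
  then show ?thesis
    unfolding fix_num_def using finite_fixing_sets[OF assms(1)] assms(2)
    by (subst Min_ge_iff) auto
qed

lemma Inl_in_Plus_iff [simp]: "Inl a \<in> A <+> B \<longleftrightarrow> a \<in> A"
  by auto

lemma Inr_in_Plus_iff [simp]: "Inr b \<in> A <+> B \<longleftrightarrow> b \<in> B"
  by auto

abbreviation complete_functigraph_E :: "('a \<Rightarrow> 'a) \<Rightarrow> 'a + 'a \<Rightarrow> 'a + 'a \<Rightarrow> bool" where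
  "complete_functigraph_E g \<equiv> functigraph_E (\<lambda>x y. x \<noteq> y) g"

lemma functigraph_V_eq_Plus: "functigraph_V V = V <+> V"
  by (simp add: functigraph_V_def Plus_def)

lemma complete_functigraph_neighbours_Inl:
  assumes "u \<in> V" and "g ` V \<subseteq> V"
  shows "{v \<in> functigraph_V V. complete_functigraph_E g (Inl u) v} = (V - {u}) <+> {g u}"
proof (rule set_eqI)
  fix v show "v \<in> {v \<in> functigraph_V V. complete_functigraph_E g (Inl u) v} \<longleftrightarrow> v \<in> (V - {u}) <+> {g u}"
    using assms by (cases v) (auto simp: functigraph_V_eq_Plus)
qed

lemma complete_functigraph_neighbours_Inr:
  assumes "w \<in> V"
  shows "{v \<in> functigraph_V V. complete_functigraph_E g (Inr w) v} = {u \<in> V. g u = w} <+> (V - {w})"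
proof (rule set_eqI)
  fix v show "v \<in> {v \<in> functigraph_V V. complete_functigraph_E g (Inr w) v} \<longleftrightarrow> v \<in> {u \<in> V. g u = w} <+> (V - {w})"
    using assms by (cases v) (auto simp: functigraph_V_eq_Plus)
qed

lemma complete_functigraph_degree_Inl:
  assumes "finite V" and "u \<in> V" and "g ` V \<subseteq> V"
  shows "degree (functigraph_V V) (complete_functigraph_E g) (Inl u) = card V"
proof -
  have "0 < card V"
    using assms(1,2) card_gt_0_iff by auto
  then show ?thesis
    using assms unfolding degree_def by (simp add: complete_functigraph_neighbours_Inl card_Plus)
qed

lemma complete_functigraph_degree_Inr:
  assumes "finite V" and "w \<in> V"
  shows "degree (functigraph_V V) (complete_functigraph_E g) (Inr w) = card {u \<in> V. g u = w} + (card V - 1)"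
  using assms unfolding degree_def
  by (simp add: complete_functigraph_neighbours_Inr card_Plus)

lemma complete_functigraph_Inl_twins:
  assumes "fixing_set (functigraph_V V) (complete_functigraph_E g) S"
    and "u \<in> V" "v \<in> V" "u \<noteq> v" "g u = g v"
  shows "Inl u \<in> S \<or> Inl v \<in> S"
proof (rule fixing_set_twin[OF assms(1)])
  fix z
  show "complete_functigraph_E g (Inl u) z \<longleftrightarrow> complete_functigraph_E g (Inl v) z"
    and "complete_functigraph_E g z (Inl u) \<longleftrightarrow> complete_functigraph_E g z (Inl v)"
    if "z \<noteq> Inl u" "z \<noteq> Inl v"
    using that assms(5) by (cases z; simp)+
qed (use assms(2-4) in \<open>auto simp: functigraph_V_eq_Plus\<close>)

lemma complete_functigraph_Inr_twins:
  assumes "fixing_set (functigraph_V V) (complete_functigraph_E g) S"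
    and "a \<in> V - g ` V" "b \<in> V - g ` V" "a \<noteq> b"
  shows "Inr a \<in> S \<or> Inr b \<in> S"
proof (rule fixing_set_twin[OF assms(1)])
  fix z
  show "complete_functigraph_E g (Inr a) z \<longleftrightarrow> complete_functigraph_E g (Inr b) z"
    and "complete_functigraph_E g z (Inr a) \<longleftrightarrow> complete_functigraph_E g z (Inr b)"
    if "z \<in> functigraph_V V" "z \<noteq> Inr a" "z \<noteq> Inr b"
    using that assms(2,3) by (cases z; auto simp: functigraph_V_eq_Plus)+
qed (use assms(2-4) in \<open>auto simp: functigraph_V_eq_Plus\<close>)

lemma complete_functigraph_fixing_set_card_ge:
  assumes "finite V" and "g ` V \<subseteq> V"
    and fixing: "fixing_set (functigraph_V V) (complete_functigraph_E g) S"
  shows "2 * (card V - card (g ` V)) - 1 \<le> card S"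
proof -
  define X where "X = {u \<in> V. Inl u \<notin> S}"
  define Y where "Y = {w \<in> V - g ` V. Inr w \<notin> S}"
  have "inj_on g X"
    using complete_functigraph_Inl_twins[OF fixing] unfolding X_def inj_on_def by blast
  then have "card X = card (g ` X)"
    by (simp add: card_image)
  also have "\<dots> \<le> card (g ` V)"
    using \<open>finite V\<close> by (intro card_mono) (auto simp: X_def)
  finally have X: "card X \<le> card (g ` V)" .
  have "\<forall>a\<in>Y. \<forall>b\<in>Y. a = b"
    using complete_functigraph_Inr_twins[OF fixing] unfolding Y_def by blast
  then have Y: "card Y \<le> 1"
    using \<open>finite V\<close> card_le_Suc0_iff_eq[of Y] by (simp add: Y_def)
  have "finite S"
    using fixing \<open>finite V\<close> finite_subset[of S "V <+> V"]
    unfolding fixing_set_def functigraph_V_eq_Plus by simp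
  moreover have "(V - X) <+> ((V - g ` V) - Y) \<subseteq> S"
    unfolding X_def Y_def by auto
  ultimately have "card ((V - X) <+> ((V - g ` V) - Y)) \<le> card S"
    by (rule card_mono)
  moreover have "X \<subseteq> V" "Y \<subseteq> V - g ` V"
    unfolding X_def Y_def by auto
  then have "card ((V - X) <+> ((V - g ` V) - Y)) = (card V - card X) + (card (V - g ` V) - card Y)"
    using \<open>finite V\<close> by (simp add: card_Plus card_Diff_subset finite_subset)
  moreover have "card (V - g ` V) = card V - card (g ` V)"
    using \<open>finite V\<close> \<open>g ` V \<subseteq> V\<close> by (simp add: card_Diff_subset)
  ultimately show ?thesis
    using X Y by linarith
qed

context
  fixes V :: "'a set" and g :: "'a \<Rightarrow> 'a" and w0 w1 w2 u1 :: 'a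
  assumes finite: "finite V" and maps_into: "g ` V \<subseteq> V"
    and w0: "w0 \<in> V" "w0 \<notin> g ` V" and w1: "w1 \<in> g ` V" and w2: "w2 \<in> g ` V" "w2 \<noteq> w1"
    and u1: "u1 \<in> V" "g u1 = w1" "u1 \<noteq> inv_into V g w1"
begin

abbreviation rep :: "'a \<Rightarrow> 'a" where "rep \<equiv> inv_into V g"

abbreviation base :: "('a + 'a) set" where
  "base \<equiv> (V - rep ` g ` V) <+> (V - {w0, w1, w2})"

lemma rep_preimage: "w \<in> g ` V \<Longrightarrow> rep w \<in> V \<and> g (rep w) = w"
  by (simp add: inv_into_into f_inv_into_f)

lemma rep_ne_u1: "w \<in> g ` V \<Longrightarrow> rep w \<noteq> u1"
  using rep_preimage u1 by metis

lemma w_in_V: "w1 \<in> V" "w2 \<in> V"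
  using w1 w2 maps_into by auto

lemma w0_ne: "w0 \<noteq> w1" "w0 \<noteq> w2"
  using w0 w1 w2 by auto

lemma card_base: "card base = 2 * card V - card (g ` V) - 3"
proof -
  have reps: "rep ` g ` V \<subseteq> V" "card (rep ` g ` V) = card (g ` V)"
    using rep_preimage by (auto simp: card_image inj_on_inv_into)
  have ws: "{w0, w1, w2} \<subseteq> V" "card {w0, w1, w2} = 3"
    using w0 w_in_V w0_ne w2(2) by auto
  have "card base = (card V - card (g ` V)) + (card V - 3)"
    using finite reps ws by (simp add: card_Plus card_Diff_subset finite_subset)
  moreover have "card (g ` V) \<le> card V" "3 \<le> card V"
    using card_mono[OF finite reps(1)] card_mono[OF finite ws(1)] reps(2) ws(2) by auto
  ultimately show ?thesis
    by linarith
qed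

lemma outside_base:
  assumes "y \<in> functigraph_V V - base"
  obtains w where "w \<in> g ` V" "y = Inl (rep w)" | "y = Inr w0" | "y = Inr w1" | "y = Inr w2"
  using assms unfolding functigraph_V_eq_Plus by blast

lemma u1_in_base: "Inl u1 \<in> base"
  using u1(1) rep_ne_u1 by auto

lemma fixing_set_base_insert_reps:
  "fixing_set (functigraph_V V) (complete_functigraph_E g) (insert (Inr w1) base \<union> Inl ` rep ` g ` V)"
  (is "fixing_set _ _ ?S")
proof (rule fixing_set_reduce)
  have reps: "rep ` g ` V \<subseteq> V"
    using rep_preimage by auto
  show "?S \<subseteq> functigraph_V V"
    using reps w_in_V by (auto simp: functigraph_V_eq_Plus)
  have split: "?S \<union> {Inr w2} = functigraph_V V - {Inr w0}"
  proof (rule set_eqI)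
    fix y show "y \<in> ?S \<union> {Inr w2} \<longleftrightarrow> y \<in> functigraph_V V - {Inr w0}"
      using reps w_in_V w0_ne by (cases y) (auto simp: functigraph_V_eq_Plus)
  qed
  have "Inr w0 \<in> functigraph_V V"
    using w0 by (simp add: functigraph_V_eq_Plus)
  then show "fixing_set (functigraph_V V) (complete_functigraph_E g) (?S \<union> {Inr w2})"
    unfolding split by (rule fixing_set_Diff_singleton)
  fix x y assume "x \<in> {Inr w2}" "y \<in> functigraph_V V - ?S" "y \<noteq> x"
  then have "x = Inr w2" "y = Inr w0"
    using split by auto
  moreover have "Inl (rep w2) \<in> ?S"
    using w2 by blast
  ultimately show "distinguishes (functigraph_V V) (complete_functigraph_E g) ?S x y"
    unfolding distinguishes_def using rep_preimage[OF w2(1)] w0_ne by (intro disjI1 bexI[of _ "Inl (rep w2)"]) auto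
qed

lemma fixing_set_base_insert:
  "fixing_set (functigraph_V V) (complete_functigraph_E g) (insert (Inr w1) base)"
  (is "fixing_set _ _ ?S")
proof (rule fixing_set_reduce[OF _ fixing_set_base_insert_reps])
  show "?S \<subseteq> functigraph_V V"
    using w_in_V by (auto simp: functigraph_V_eq_Plus)
  fix x y assume "x \<in> Inl ` rep ` g ` V" and y: "y \<in> functigraph_V V - ?S" "y \<noteq> x"
  then obtain w where w: "w \<in> g ` V" "x = Inl (rep w)"
    by blast
  have "y \<in> functigraph_V V - base"
    using y by auto
  then show "distinguishes (functigraph_V V) (complete_functigraph_E g) ?S x y"
  proof (rule outside_base)
    fix w' assume w': "w' \<in> g ` V" "y = Inl (rep w')"
    then have "w' \<noteq> w"
      using y w by auto
    then obtain c where c: "c \<in> {w, w'}" "c \<noteq> w2"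
      by blast
    then have "Inr c \<in> ?S"
      using w(1) w'(1) w0 maps_into by auto
    then show ?thesis
      unfolding distinguishes_def using c \<open>w' \<noteq> w\<close> rep_preimage[OF w(1)] rep_preimage[OF w'(1)] w(2) w'(2)
      by (intro disjI1 bexI[of _ "Inr c"]) auto
  qed (use y w u1 u1_in_base rep_ne_u1 w0_ne in \<open>auto simp: distinguishes_def intro!: bexI[of _ "Inl u1"]\<close>)
qed

lemma fixing_set_base:
  "fixing_set (functigraph_V V) (complete_functigraph_E g) base"
proof (rule fixing_set_reduce[where X = "{Inr w1}"])
  show "base \<subseteq> functigraph_V V"
    by (auto simp: functigraph_V_eq_Plus)
  show "fixing_set (functigraph_V V) (complete_functigraph_E g) (base \<union> {Inr w1})"
    using fixing_set_base_insert by simp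
  fix x y assume "x \<in> {Inr w1}" and y: "y \<in> functigraph_V V - base" "y \<noteq> x"
  then have x: "x = Inr w1"
    by simp
  from y(1) show "distinguishes (functigraph_V V) (complete_functigraph_E g) base x y"
  proof (rule outside_base)
    fix w assume "w \<in> g ` V" "y = Inl (rep w)"
    then have "degree (functigraph_V V) (complete_functigraph_E g) y = card V"
      using rep_preimage finite maps_into by (simp add: complete_functigraph_degree_Inl)
    moreover have "card V < degree (functigraph_V V) (complete_functigraph_E g) x"
    proof -
      have "{u1, rep w1} \<subseteq> {u \<in> V. g u = w1}" "card {u1, rep w1} = 2"
        using u1 rep_preimage[OF w1] by auto
      then have "2 \<le> card {u \<in> V. g u = w1}"
        using finite by (metis (no_types, lifting) card_mono finite_subset mem_Collect_eq subsetI)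
      moreover have "0 < card V"
        using u1 finite card_gt_0_iff by auto
      ultimately show ?thesis
        using x finite w_in_V by (simp add: complete_functigraph_degree_Inr)
    qed
    ultimately show ?thesis
      unfolding distinguishes_def by simp
  qed (use x y u1 u1_in_base w0_ne w2(2) in \<open>auto simp: distinguishes_def intro!: bexI[of _ "Inl u1"]\<close>)
qed

end

lemma complete_functigraph_fix_num_ge:
  assumes "finite V" and "g ` V \<subseteq> V"
  shows "2 * (card V - card (g ` V)) - 1 \<le> fix_num (functigraph_V V) (complete_functigraph_E g)"
proof (rule fix_num_ge)
  show "finite (functigraph_V V)"
    using assms(1) by (simp add: functigraph_V_eq_Plus)
qed (rule complete_functigraph_fixing_set_card_ge[OF assms])

lemma complete_functigraph_fix_num_le:
  assumes "finite V" and "g ` V \<subseteq> V" and "1 < card (g ` V)" and "card (g ` V) < card V"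
  shows "fix_num (functigraph_V V) (complete_functigraph_E g) \<le> 2 * card V - card (g ` V) - 3"
proof -
  have "g ` V \<noteq> V"
    using assms(4) by auto
  then obtain w0 where w0: "w0 \<in> V" "w0 \<notin> g ` V"
    using assms(2) by blast
  have "\<not> inj_on g V"
    using assms(4) card_image[of g V] by auto
  then obtain a b where ab: "a \<in> V" "b \<in> V" "a \<noteq> b" "g a = g b"
    unfolding inj_on_def by blast
  define w1 where "w1 = g a"
  have "\<not> card (g ` V) \<le> Suc 0"
    using assms(3) by simp
  then obtain c d where "c \<in> g ` V" "d \<in> g ` V" "c \<noteq> d"
    using card_le_Suc0_iff_eq[of "g ` V"] assms(1) by blast
  then obtain w2 where w2: "w2 \<in> g ` V" "w2 \<noteq> w1"
    by blast
  define u1 where "u1 = (if a = inv_into V g w1 then b else a)"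
  have w1: "w1 \<in> g ` V" and u1: "u1 \<in> V" "g u1 = w1" "u1 \<noteq> inv_into V g w1"
    using ab unfolding w1_def u1_def by auto
  have "finite (functigraph_V V)"
    using assms(1) by (simp add: functigraph_V_eq_Plus)
  from fix_num_le[OF this fixing_set_base[OF assms(1,2) w0 w1 w2 u1]]
  show ?thesis
    unfolding card_base[OF assms(1,2) w0 w1 w2 u1] .
qed

theorem theorem3p1:
  fixes V :: "'a set" and g :: "'a \<Rightarrow> 'a" and n s :: nat
  assumes "finite V" and "card V = n" and "n \<ge> 3"
    and "g ` V \<subseteq> V"
    and "s = card (g ` V)" and "1 < s" and "s < n"
  shows "2 * (n - s) - 1 \<le> fix_num (functigraph_V V) (functigraph_E (\<lambda>x y. x \<noteq> y) g)
       \<and> fix_num (functigraph_V V) (functigraph_E (\<lambda>x y. x \<noteq> y) g) \<le> 2 * n - s - 3"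
proof
  show "2 * (n - s) - 1 \<le> fix_num (functigraph_V V) (complete_functigraph_E g)"
    using complete_functigraph_fix_num_ge[OF assms(1,4)] unfolding assms(2,5) .
  have "1 < card (g ` V)" "card (g ` V) < card V"
    using assms(2,5-7) by simp_all
  from complete_functigraph_fix_num_le[OF assms(1,4) this]
  show "fix_num (functigraph_V V) (complete_functigraph_E g) \<le> 2 * n - s - 3"
    unfolding assms(2,5) .
qed

end
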